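(* Let $k\ge2$ be an integer. If there exists an integer $\alpha\ge2$ such that $N_\alpha(k,k)<N_{\alpha+1}(k,k)$, then at least one of the following holds: (1) Letting $W_{k,\alpha}$ be the set of words over $\{1,\dots,\alpha+1\}$ of length $N_\alpha(k,k)$ that contain no factor which is a $k$-power or a $k$-anti-power, for every $w\in W_{k,\alpha}$ the two factors of $w$ of length $N_\alpha(k,k)-1$ each use exactly $\alpha+1$ distinct letters. (2) There exists a word $w$ over $\{1,\dots,\alpha\}$, containing no factor which is a $k$-power or a $k$-anti-power, of the form $$w=u_1(1u_1)^{k-1}x_1=u_2(2u_2)^{k-1}x_2=\cdots=u_\alpha(\alpha u_\alpha)^{k-1}x_\alpha,$$ where $x_1,\dots,x_\alpha,u_1,\dots,u_\alpha$ are finite words with $|u_1|<\cdots<|u_\alpha|$ and, for all $1\le i<j\le\alpha$, $$\gcd(|u_i|+1,|u_j|+1)\le\frac{|u_j|+1}{k-1}.$$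
   Context: A $k$-power is a word $u^k$ ($k$ concatenated copies of $u$) for a nonempty word $u$. A $k$-anti-power is a word $w=w_1\cdots w_k$ with $|w_1|=\cdots=|w_k|$ and $w_1,\dots,w_k$ pairwise distinct. $N_\alpha(k,k)$ is the smallest positive integer $N$ such that every word of length $N$ over an alphabet of size $\alpha$ contains a factor (contiguous subword) that is a $k$-power or a $k$-anti-power. In $(a u)^{k-1}$, $a$ denotes the single letter $a$. *)

theory Defs
  imports Complex_Main
begin

definition is_factor :: "nat list \<Rightarrow> nat list \<Rightarrow> bool" where
  "is_factor v w \<longleftrightarrow> (\<exists>p s. w = p @ v @ s)"

definition is_k_power :: "nat \<Rightarrow> nat list \<Rightarrow> bool" where
  "is_k_power k v \<longleftrightarrow> (\<exists>u. u \<noteq> [] \<and> v = concat (replicate k u))"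

definition is_k_antipower :: "nat \<Rightarrow> nat list \<Rightarrow> bool" where
  "is_k_antipower k v \<longleftrightarrow>
     (\<exists>ws m. length ws = k \<and> v = concat ws \<and> (\<forall>b\<in>set ws. length b = m) \<and> distinct ws)"

definition avoids :: "nat \<Rightarrow> nat list \<Rightarrow> bool" where
  "avoids k w \<longleftrightarrow> \<not> (\<exists>v. is_factor v w \<and> (is_k_power k v \<or> is_k_antipower k v))"

definition N_kk :: "nat \<Rightarrow> nat \<Rightarrow> nat" where
  "N_kk \<alpha> k = (LEAST N. 0 < N \<and> (\<forall>w. length w = N \<and> set w \<subseteq> {1..\<alpha>} \<longrightarrow> \<not> avoids k w))"

definition W_set :: "nat \<Rightarrow> nat \<Rightarrow> nat list set" where
  "W_set k \<alpha> = {w. set w \<subseteq> {1..\<alpha>+1} \<and> length w = N_kk \<alpha> k \<and> avoids k w}"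

end

theory Submission
  imports Defs
begin

text \<open>Let N = N_\<alpha>(k,k) and suppose some w in W_{k,\<alpha>} has a factor of length N - 1 with at
  most \<alpha> letters; after reversing w we may take it to be the tail, w = c w'. As no word of
  length N over \<alpha> letters avoids k-powers and k-anti-powers, c does not occur in w' and w' has
  exactly \<alpha> letters. For each letter d of w' the word d w' has length N and only \<alpha> letters, so
  it has a bad factor, which must be a prefix; an anti-power prefix would stay one after replacing
  d by the fresh letter c, hence it is a k-power and w' = u_d (d u_d)^(k-1) x_d. Two such prefixes
  with periods p = |u_d| + 1 < q = |u_e| + 1 and different letters cannot both act on the
  positions p - 1, q - 1, p - 1 + q, which forces q \<ge> (k-1) p and hence the gcd bound. Renaming
  the letters by the rank of |u_d| gives alternative (2).\<close>

lemma is_factor_Cons: "is_factor v w \<Longrightarrow> is_factor v (c # w)"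
  unfolding is_factor_def by (metis append_Cons)

lemma is_factor_trans: "is_factor u v \<Longrightarrow> is_factor v w \<Longrightarrow> is_factor u w"
  unfolding is_factor_def by (metis append.assoc)

lemma is_factor_Cons_cases:
  assumes "is_factor v (d # w)"
  shows "is_factor v w \<or> (\<exists>v' s. v = d # v' \<and> w = v' @ s)"
proof -
  obtain p s where ps: "d # w = p @ v @ s" using assms unfolding is_factor_def by blast
  show ?thesis
  proof (cases p)
    case Nil
    then show ?thesis using ps unfolding is_factor_def by (cases v) auto
  next
    case (Cons e p')
    then show ?thesis using ps unfolding is_factor_def by auto
  qed
qed

lemma is_factor_rev: "is_factor v w \<Longrightarrow> is_factor (rev v) (rev w)"
  unfolding is_factor_def by (metis append.assoc rev_append)

lemma is_factor_map:
  assumes "is_factor v (map f w)"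
  obtains v' where "is_factor v' w" "v = map f v'"
proof -
  obtain p s where "map f w = p @ v @ s" using assms unfolding is_factor_def by blast
  then obtain p' r where "w = p' @ r" "map f r = v @ s"
    using map_eq_append_conv[of f w p "v @ s"] by metis
  moreover obtain v' s' where "r = v' @ s'" "v = map f v'"
    using \<open>map f r = v @ s\<close> map_eq_append_conv[of f r v s] by metis
  ultimately show thesis using that unfolding is_factor_def by blast
qed

lemma avoids_factor: "is_factor v w \<Longrightarrow> avoids k w \<Longrightarrow> avoids k v"
  unfolding avoids_def by (meson is_factor_trans)

lemma is_k_power_rev: "is_k_power k v \<Longrightarrow> is_k_power k (rev v)"
  unfolding is_k_power_def
  by (metis Nil_is_rev_conv rev_concat map_replicate rev_replicate)

lemma is_k_antipower_rev: "is_k_antipower k v \<Longrightarrow> is_k_antipower k (rev v)"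
  unfolding is_k_antipower_def
proof (elim exE conjE)
  fix ws m assume "length ws = k" "v = concat ws" "\<forall>b\<in>set ws. length b = m" "distinct ws"
  then show "\<exists>ws m. length ws = k \<and> rev v = concat ws \<and> (\<forall>b\<in>set ws. length b = m) \<and> distinct ws"
    by (intro exI[of _ "rev (map rev ws)"] exI[of _ m]) (auto simp: rev_concat rev_map distinct_map)
qed

lemma avoids_rev: "avoids k w \<Longrightarrow> avoids k (rev w)"
  unfolding avoids_def
  by (metis is_factor_rev is_k_power_rev is_k_antipower_rev rev_rev_ident)

lemma is_k_power_map: "is_k_power k v \<Longrightarrow> is_k_power k (map f v)"
  unfolding is_k_power_def by (auto simp: map_concat)

lemma is_k_antipower_map:
  assumes "inj_on f (set v)" "is_k_antipower k v"
  shows "is_k_antipower k (map f v)"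
proof -
  obtain ws m where ws: "length ws = k" "v = concat ws" "\<forall>b\<in>set ws. length b = m" "distinct ws"
    using assms(2) unfolding is_k_antipower_def by blast
  have "inj_on (map f) (set ws)"
  proof (rule inj_onI)
    fix b b' assume "b \<in> set ws" "b' \<in> set ws" "map f b = map f b'"
    moreover have "inj_on f (set b \<union> set b')"
      using assms(1) ws(2) \<open>b \<in> set ws\<close> \<open>b' \<in> set ws\<close> by (auto intro: inj_on_subset)
    ultimately show "b = b'" by (simp add: inj_on_map_eq_map)
  qed
  then show ?thesis unfolding is_k_antipower_def
    using ws by (intro exI[of _ "map (map f) ws"] exI[of _ m]) (auto simp: map_concat distinct_map)
qed

lemma avoids_map:
  assumes "inj_on f (set w)" "avoids k w"
  shows "avoids k (map f w)"
  unfolding avoids_def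
proof
  assume "\<exists>v. is_factor v (map f w) \<and> (is_k_power k v \<or> is_k_antipower k v)"
  then obtain v where factor: "is_factor v (map f w)" and bad: "is_k_power k v \<or> is_k_antipower k v"
    by blast
  obtain v' where v': "is_factor v' w" "v = map f v'" using factor by (rule is_factor_map)
  have "set v' \<subseteq> set w" using v'(1) unfolding is_factor_def by auto
  then have "map (inv_into (set w) f) v = v'" and "inj_on (inv_into (set w) f) (set v)"
    using assms(1) v'(2) by (auto intro!: map_idI inj_on_inv_into)
  then have "is_k_power k v' \<or> is_k_antipower k v'"
    using bad is_k_power_map is_k_antipower_map by metis
  then show False using v'(1) assms(2) unfolding avoids_def by blast
qed

lemma is_k_power_Cons:
  assumes "is_k_power k (d # v)" "k \<ge> 1"
  obtains z where "v = z @ concat (replicate (k - 1) (d # z))"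
proof -
  obtain u where "u \<noteq> []" "d # v = concat (replicate k u)"
    using assms(1) unfolding is_k_power_def by blast
  moreover obtain k' where "k = Suc k'" using assms(2) by (cases k) auto
  ultimately show thesis using that by (cases u) auto
qed

lemma is_k_antipower_Cons_swap:
  assumes "is_k_antipower k (d # v)" "c \<notin> set v"
  shows "is_k_antipower k (c # v)"
proof -
  obtain ws m where ws: "length ws = k" "d # v = concat ws" "\<forall>b\<in>set ws. length b = m" "distinct ws"
    using assms(1) unfolding is_k_antipower_def by blast
  then obtain b bs where "ws = b # bs" by (cases ws) auto
  moreover have "b \<noteq> []"
  proof
    assume "b = []"
    then have "\<forall>b\<in>set ws. b = []" using ws(3) \<open>ws = b # bs\<close> by auto
    then have "concat ws = []" by simp
    then show False using ws(2) by (metis list.distinct(1))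
  qed
  ultimately obtain b' where b: "ws = (d # b') # bs" and v: "v = b' @ concat bs"
    using ws(2) by (cases b) auto
  have "c # b' \<notin> set bs" using assms(2) v by auto
  then show ?thesis unfolding is_k_antipower_def
    using ws b v by (intro exI[of _ "(c # b') # bs"] exI[of _ m]) auto
qed

lemma nth_concat_replicate:
  "n < m * length y \<Longrightarrow> concat (replicate m y) ! n = y ! (n mod length y)"
proof (induction m arbitrary: n)
  case 0
  then show ?case by simp
next
  case (Suc m)
  show ?case
  proof (cases "n < length y")
    case True
    then show ?thesis by (simp add: nth_append)
  next
    case False
    then have "concat (replicate (Suc m) y) ! n = y ! ((n - length y) mod length y)"
      using Suc by (simp add: nth_append)
    then show ?thesis using False by (simp add: le_mod_geq)
  qed
qed

lemma concat_replicate_Cons_shift: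
  "z @ concat (replicate m (d # z)) = concat (replicate m (z @ [d])) @ z"
  by (induction m) auto

lemma nth_power_prefix:
  assumes w: "w = z @ concat (replicate m (d # z)) @ x"
    and n: "n < m * (length z + 1) + length z"
  shows "w ! n = (z @ [d]) ! (n mod (length z + 1))"
proof -
  have w': "w = concat (replicate m (z @ [d])) @ z @ x"
    using w concat_replicate_Cons_shift[of z m d] by (metis append.assoc)
  have len: "length (concat (replicate m (z @ [d]))) = m * (length z + 1)"
    by (simp add: length_concat sum_list_replicate)
  show ?thesis
  proof (cases "n < m * (length z + 1)")
    case True
    then show ?thesis using w' len nth_concat_replicate[of n m "z @ [d]"] by (simp add: nth_append)
  next
    case False
    define r where "r = n - m * (length z + 1)"
    then have r: "n = r + (length z + 1) * m" "r < length z" using False n by auto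
    then have "n mod (length z + 1) = r" by (metis mod_mult_self2 mod_less less_SucI Suc_eq_plus1)
    with r show ?thesis using w' len by (simp add: nth_append)
  qed
qed

lemma power_prefix_gap:
  assumes k: "k \<ge> 2"
    and w1: "w = z1 @ concat (replicate (k - 1) (d1 # z1)) @ x1"
    and w2: "w = z2 @ concat (replicate (k - 1) (d2 # z2)) @ x2"
    and lt: "length z1 < length z2" and ne: "d1 \<noteq> d2"
  shows "(k - 1) * (length z1 + 1) \<le> length z2 + 1"
proof (rule ccontr)
  define p where "p = length z1 + 1"
  define q where "q = length z2 + 1"
  assume "\<not> ?thesis"
  then have q_lt: "q < (k - 1) * p" unfolding p_def q_def by simp
  have "0 < p" "p < q" using lt unfolding p_def q_def by simp_all
  moreover have "1 * q \<le> (k - 1) * q" using k by (intro mult_le_mono1) simp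
  ultimately have p_lt: "p < (k - 1) * q" by linarith
  have per1: "w ! n = (z1 @ [d1]) ! (n mod p)" if "n < (k - 1) * p + p - 1" for n
    using nth_power_prefix[OF w1, of n] that unfolding p_def by simp
  have per2: "w ! n = (z2 @ [d2]) ! (n mod q)" if "n < (k - 1) * q + q - 1" for n
    using nth_power_prefix[OF w2, of n] that unfolding q_def by simp
  have "d1 = w ! (p - 1)"
  proof -
    have "p - 1 < (k - 1) * p + p - 1" using q_lt \<open>0 < p\<close> \<open>p < q\<close> by linarith
    moreover have "(p - 1) mod p = length z1" unfolding p_def by simp
    ultimately show ?thesis using per1[of "p - 1"] by simp
  qed
  also have "\<dots> = w ! (p - 1 + q)"
  proof -
    have "p - 1 + q < (k - 1) * q + q - 1" "p - 1 < (k - 1) * q + q - 1"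
      using p_lt \<open>0 < p\<close> by linarith+
    moreover have "(p - 1 + q) mod q = (p - 1) mod q" by simp
    ultimately show ?thesis using per2[of "p - 1 + q"] per2[of "p - 1"] by simp
  qed
  also have "\<dots> = w ! (q - 1)"
  proof -
    have "p - 1 + q = (q - 1) + p" using \<open>0 < p\<close> \<open>p < q\<close> by simp
    then have "(p - 1 + q) mod p = (q - 1) mod p" by simp
    moreover have "p - 1 + q < (k - 1) * p + p - 1" using q_lt \<open>0 < p\<close> by linarith
    ultimately show ?thesis using per1[of "q - 1"] per1[of "p - 1 + q"] q_lt by simp
  qed
  also have "\<dots> = d2"
  proof -
    have "q - 1 < (k - 1) * q + q - 1" using p_lt \<open>0 < p\<close> \<open>p < q\<close> by linarith
    moreover have "(q - 1) mod q = length z2" unfolding q_def by simp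
    ultimately show ?thesis using per2[of "q - 1"] by simp
  qed
  finally have "d1 = d2" .
  with ne show False ..
qed

definition length_forces :: "nat \<Rightarrow> nat \<Rightarrow> nat \<Rightarrow> bool" where
  "length_forces k \<alpha> N \<longleftrightarrow> (\<forall>w. length w = N \<and> set w \<subseteq> {1..\<alpha>} \<longrightarrow> \<not> avoids k w)"

lemma length_forces_Suc: "length_forces k (Suc \<alpha>) N \<Longrightarrow> length_forces k \<alpha> N"
  unfolding length_forces_def by (auto 0 3 dest: order_trans[OF _ atLeastatMost_subset_iff[THEN iffD2]])

text \<open>If no length were forced over \<alpha> letters, then none would be over \<alpha> + 1 letters either,
  and both values of N_kk would be the same junk value of LEAST.\<close>
lemma N_kk_forces:
  assumes "N_kk \<alpha> k < N_kk (Suc \<alpha>) k"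
  shows "0 < N_kk \<alpha> k" "length_forces k \<alpha> (N_kk \<alpha> k)"
proof -
  have N_kk: "N_kk a k = (LEAST N. 0 < N \<and> length_forces k a N)" for a
    unfolding N_kk_def length_forces_def ..
  have "\<exists>N. 0 < N \<and> length_forces k \<alpha> N"
  proof (rule ccontr)
    assume "\<not> ?thesis"
    then have "\<not> (\<exists>N. 0 < N \<and> length_forces k (Suc \<alpha>) N)" using length_forces_Suc by blast
    with \<open>\<not> ?thesis\<close> have "N_kk \<alpha> k = N_kk (Suc \<alpha>) k" unfolding N_kk by metis
    then show False using assms by simp
  qed
  then show "0 < N_kk \<alpha> k" "length_forces k \<alpha> (N_kk \<alpha> k)"
    unfolding N_kk by (metis (mono_tags, lifting) LeastI_ex)+
qed

lemma card_set_gt_if_avoids: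
  assumes "length_forces k \<alpha> (length v)" "avoids k v"
  shows "\<alpha> < card (set v)"
proof (rule ccontr)
  assume "\<not> ?thesis"
  then obtain f where f: "f ` set v \<subseteq> {1..\<alpha>}" "inj_on f (set v)"
    using card_le_inj[of "set v" "{1..\<alpha>}"] by auto
  have "avoids k (map f v)" using f(2) assms(2) by (rule avoids_map)
  moreover have "set (map f v) \<subseteq> {1..\<alpha>}" using f by simp
  ultimately show False using assms(1) unfolding length_forces_def by simp
qed

lemma power_prefix_if_fresh_head:
  assumes k: "k \<ge> 1"
    and forces: "length_forces k \<alpha> (Suc (length w))"
    and av: "avoids k (c # w)" and fresh: "c \<notin> set w" and card: "card (set w) \<le> \<alpha>"
    and d: "d \<in> set w"
  obtains z x where "w = z @ concat (replicate (k - 1) (d # z)) @ x"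
proof -
  have "\<not> avoids k (d # w)"
    using card_set_gt_if_avoids[of k \<alpha> "d # w"] forces card d by (auto simp: insert_absorb)
  then obtain v where v: "is_factor v (d # w)" and bad: "is_k_power k v \<or> is_k_antipower k v"
    unfolding avoids_def by blast
  have "\<not> is_factor v w"
    using av bad is_factor_Cons unfolding avoids_def by blast
  then obtain v' s where v': "v = d # v'" and w: "w = v' @ s"
    using is_factor_Cons_cases[OF v] by blast
  have "\<not> is_k_antipower k (c # v')"
    using av w unfolding avoids_def is_factor_def by (metis append_Cons append_Nil)
  then have "is_k_power k v"
    using bad v' w fresh is_k_antipower_Cons_swap by fastforce
  then obtain z where "v' = z @ concat (replicate (k - 1) (d # z))"
    using is_k_power_Cons k v' by blast
  then show thesis using that w by simp
qed

lemma ex_rank_bij_betw: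
  fixes L :: "'a \<Rightarrow> 'b::linorder"
  assumes fin: "finite A" and inj: "inj_on L A"
  obtains \<sigma> where "bij_betw \<sigma> A {1..card A}"
    "\<And>d e. d \<in> A \<Longrightarrow> e \<in> A \<Longrightarrow> \<sigma> d < \<sigma> e \<longleftrightarrow> L d < L e"
proof -
  define \<sigma> where "\<sigma> d = Suc (card {e\<in>A. L e < L d})" for d
  have mono: "\<sigma> d < \<sigma> e" if "d \<in> A" "L d < L e" for d e
  proof -
    have "{e'\<in>A. L e' < L d} \<subset> {e'\<in>A. L e' < L e}" using that by auto
    then show ?thesis unfolding \<sigma>_def using fin by (simp add: psubset_card_mono)
  qed
  have iff: "\<sigma> d < \<sigma> e \<longleftrightarrow> L d < L e" if "d \<in> A" "e \<in> A" for d e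
  proof
    assume "\<sigma> d < \<sigma> e"
    show "L d < L e"
    proof (rule ccontr)
      assume "\<not> L d < L e"
      then have "L e < L d \<or> L e = L d" by auto
      then have "L e < L d \<or> e = d" using inj that by (auto dest: inj_onD)
      then show False using mono[of d e] mono[of e d] that \<open>\<sigma> d < \<sigma> e\<close> by auto
    qed
  qed (use mono that in blast)
  have "inj_on \<sigma> A"
  proof (rule inj_onI)
    fix d e assume "d \<in> A" "e \<in> A" "\<sigma> d = \<sigma> e"
    then have "L d = L e" using iff[of d e] iff[of e d] by auto
    then show "d = e" using inj \<open>d \<in> A\<close> \<open>e \<in> A\<close> by (simp add: inj_on_eq_iff)
  qed
  moreover have "\<sigma> ` A \<subseteq> {1..card A}"
  proof
    fix i assume "i \<in> \<sigma> ` A"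
    then obtain d where d: "d \<in> A" "i = \<sigma> d" by blast
    have "card {e\<in>A. L e < L d} \<le> card (A - {d})" using fin by (intro card_mono) auto
    moreover have "0 < card A" using fin d(1) card_gt_0_iff by blast
    ultimately show "i \<in> {1..card A}" using d fin by (simp add: \<sigma>_def card_Diff_singleton)
  qed
  moreover have "card (\<sigma> ` A) = card {1..card A}"
    using \<open>inj_on \<sigma> A\<close> by (simp add: card_image)
  ultimately have "bij_betw \<sigma> A {1..card A}"
    unfolding bij_betw_def by (simp add: card_subset_eq)
  with iff show thesis using that by blast
qed

definition power_staircase ::
  "nat \<Rightarrow> nat \<Rightarrow> nat list \<Rightarrow> (nat \<Rightarrow> nat list) \<Rightarrow> (nat \<Rightarrow> nat list) \<Rightarrow> bool" where
  "power_staircase k \<alpha> w u x \<longleftrightarrow>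
     (\<forall>i\<in>{1..\<alpha>}. w = u i @ concat (replicate (k-1) (i # u i)) @ x i) \<and>
     (\<forall>i j. 1 \<le> i \<and> i < j \<and> j \<le> \<alpha> \<longrightarrow> length (u i) < length (u j)) \<and>
     (\<forall>i j. 1 \<le> i \<and> i < j \<and> j \<le> \<alpha> \<longrightarrow>
        real (gcd (length (u i) + 1) (length (u j) + 1)) \<le> real (length (u j) + 1) / real (k - 1))"

lemma real_gcd_le_divide:
  fixes c p q :: nat
  assumes "0 < p" "0 < c" "c * p \<le> q"
  shows "real (gcd p q) \<le> real q / real c"
proof -
  have "gcd p q \<le> p" using assms(1) by simp
  then have "c * gcd p q \<le> q" using assms(3) by (meson le_trans mult_le_mono2)
  then have "real c * real (gcd p q) \<le> real q" by (metis of_nat_le_iff of_nat_mult)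
  then show ?thesis using assms(2) by (simp add: le_divide_eq mult.commute)
qed

lemma power_staircase_relabel:
  assumes k: "k \<ge> 2" and card: "card (set w) = \<alpha>" and av: "avoids k w"
    and prefix: "\<And>d. d \<in> set w \<Longrightarrow> w = z d @ concat (replicate (k - 1) (d # z d)) @ x d"
  shows "\<exists>v u y. set v \<subseteq> {1..\<alpha>} \<and> avoids k v \<and> power_staircase k \<alpha> v u y"
proof -
  define L where "L d = length (z d)" for d
  have "w ! L d = d" if "d \<in> set w" for d
  proof -
    have "k - 1 = Suc (k - 2)" using k by simp
    then show ?thesis using prefix[OF that] unfolding L_def by (simp add: nth_append)
  qed
  then have "inj_on L (set w)" by (metis inj_onI)
  then obtain \<sigma> where bij: "bij_betw \<sigma> (set w) {1..\<alpha>}"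
    and rank: "\<And>d e. d \<in> set w \<Longrightarrow> e \<in> set w \<Longrightarrow> \<sigma> d < \<sigma> e \<longleftrightarrow> L d < L e"
    using ex_rank_bij_betw[of "set w" L] card by auto
  define \<tau> where "\<tau> = inv_into (set w) \<sigma>"
  have \<tau>: "\<tau> i \<in> set w" "\<sigma> (\<tau> i) = i" if "i \<in> {1..\<alpha>}" for i
    using that bij unfolding \<tau>_def by (auto intro: inv_into_into f_inv_into_f simp: bij_betw_def)
  have lt: "L (\<tau> i) < L (\<tau> j)" and gap: "(k - 1) * (L (\<tau> i) + 1) \<le> L (\<tau> j) + 1"
    if "1 \<le> i" "i < j" "j \<le> \<alpha>" for i j
  proof -
    have i: "i \<in> {1..\<alpha>}" and j: "j \<in> {1..\<alpha>}" using that by auto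
    show "L (\<tau> i) < L (\<tau> j)" using rank[OF \<tau>(1)[OF i] \<tau>(1)[OF j]] \<tau>(2)[OF i] \<tau>(2)[OF j] that by simp
    moreover have "\<tau> i \<noteq> \<tau> j" using \<tau>(2)[OF i] \<tau>(2)[OF j] that by auto
    ultimately show "(k - 1) * (L (\<tau> i) + 1) \<le> L (\<tau> j) + 1"
      using power_prefix_gap[OF k prefix[OF \<tau>(1)[OF i]] prefix[OF \<tau>(1)[OF j]]] unfolding L_def by simp
  qed
  have "power_staircase k \<alpha> (map \<sigma> w) (\<lambda>i. map \<sigma> (z (\<tau> i))) (\<lambda>i. map \<sigma> (x (\<tau> i)))"
    unfolding power_staircase_def
  proof (intro conjI ballI allI impI)
    fix i assume i: "i \<in> {1..\<alpha>}"
    have "map \<sigma> w = map \<sigma> (z (\<tau> i) @ concat (replicate (k - 1) (\<tau> i # z (\<tau> i))) @ x (\<tau> i))"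
      using prefix[OF \<tau>(1)[OF i]] by simp
    then show "map \<sigma> w = map \<sigma> (z (\<tau> i)) @ concat (replicate (k - 1) (i # map \<sigma> (z (\<tau> i)))) @ map \<sigma> (x (\<tau> i))"
      by (simp add: map_concat \<tau>(2)[OF i])
  next
    fix i j assume ij: "1 \<le> i \<and> i < j \<and> j \<le> \<alpha>"
    then show "length (map \<sigma> (z (\<tau> i))) < length (map \<sigma> (z (\<tau> j)))"
      using lt unfolding L_def by simp
    have "real (gcd (L (\<tau> i) + 1) (L (\<tau> j) + 1)) \<le> real (L (\<tau> j) + 1) / real (k - 1)"
      using gap[of i j] ij k by (intro real_gcd_le_divide) auto
    then show "real (gcd (length (map \<sigma> (z (\<tau> i))) + 1) (length (map \<sigma> (z (\<tau> j))) + 1))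
             \<le> real (length (map \<sigma> (z (\<tau> j))) + 1) / real (k - 1)"
      unfolding L_def by simp
  qed
  moreover have "set (map \<sigma> w) \<subseteq> {1..\<alpha>}" using bij by (simp add: bij_betw_def)
  moreover have "avoids k (map \<sigma> w)" using bij av by (simp add: bij_betw_def avoids_map)
  ultimately show ?thesis by blast
qed

lemma staircase_if_tail_misses_letter:
  assumes k: "k \<ge> 2" and forces: "length_forces k \<alpha> (Suc (length w))"
    and alph: "set (c # w) \<subseteq> {1..\<alpha>+1}" and av: "avoids k (c # w)"
    and tail: "card (set w) \<noteq> \<alpha> + 1"
  shows "\<exists>v u y. set v \<subseteq> {1..\<alpha>} \<and> avoids k v \<and> power_staircase k \<alpha> v u y"
proof -
  have "card (set w) \<le> \<alpha> + 1" using alph card_mono[of "{1..\<alpha>+1}" "set w"] by auto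
  with tail have le: "card (set w) \<le> \<alpha>" by simp
  moreover have "\<alpha> < card (set (c # w))" using card_set_gt_if_avoids[of k \<alpha> "c # w"] forces av by simp
  ultimately have fresh: "c \<notin> set w" and card: "card (set w) = \<alpha>"
    by (auto simp: card_insert_if split: if_splits)
  have "\<forall>d\<in>set w. \<exists>z x. w = z @ concat (replicate (k - 1) (d # z)) @ x"
    using power_prefix_if_fresh_head[OF _ forces av fresh le] k by (metis one_le_numeral order_trans)
  then obtain z x where "\<And>d. d \<in> set w \<Longrightarrow> w = z d @ concat (replicate (k - 1) (d # z d)) @ x d"
    by metis
  moreover have "is_factor w (c # w)" unfolding is_factor_def by (metis append_Cons append_Nil append_Nil2)
  then have "avoids k w" using av by (rule avoids_factor)
  ultimately show ?thesis using power_staircase_relabel[OF k card] by blast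
qed

theorem lemma5p2:
  fixes k \<alpha> :: nat
  assumes "k \<ge> 2" and "\<alpha> \<ge> 2" and "N_kk \<alpha> k < N_kk (\<alpha>+1) k"
  shows "(\<forall>w\<in>W_set k \<alpha>.
            card (set (take (N_kk \<alpha> k - 1) w)) = \<alpha> + 1 \<and>
            card (set (drop 1 w)) = \<alpha> + 1)
       \<or> (\<exists>w u x. set w \<subseteq> {1..\<alpha>} \<and> avoids k w \<and>
            (\<forall>i\<in>{1..\<alpha>}. w = u i @ concat (replicate (k-1) (i # u i)) @ x i) \<and>
            (\<forall>i j. 1 \<le> i \<and> i < j \<and> j \<le> \<alpha> \<longrightarrow> length (u i) < length (u j)) \<and>
            (\<forall>i j. 1 \<le> i \<and> i < j \<and> j \<le> \<alpha> \<longrightarrow>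
               real (gcd (length (u i) + 1) (length (u j) + 1))
                 \<le> real (length (u j) + 1) / real (k - 1)))"
proof -
  define N where "N = N_kk \<alpha> k"
  have "0 < N" and forces: "length_forces k \<alpha> N"
    using N_kk_forces assms(3) unfolding N_def by simp_all
  have "\<exists>v u y. set v \<subseteq> {1..\<alpha>} \<and> avoids k v \<and> power_staircase k \<alpha> v u y"
    if "w \<in> W_set k \<alpha>" and fails: "card (set (take (N - 1) w)) \<noteq> \<alpha> + 1 \<or> card (set (drop 1 w)) \<noteq> \<alpha> + 1"
    for w
  proof -
    have alph: "set w \<subseteq> {1..\<alpha>+1}" and len: "length w = N" and av: "avoids k w"
      using that(1) unfolding W_set_def N_def by auto
    have staircase: "\<exists>v u y. set v \<subseteq> {1..\<alpha>} \<and> avoids k v \<and> power_staircase k \<alpha> v u y"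
      if "c # w' = v" "set v = set w" "length v = N" "avoids k v" "card (set w') \<noteq> \<alpha> + 1" for c w' v
      using staircase_if_tail_misses_letter[OF assms(1), of \<alpha> w' c] that alph len forces by auto
    have "w \<noteq> []" using len \<open>0 < N\<close> by auto
    from fails show ?thesis
    proof
      assume "card (set (take (N - 1) w)) \<noteq> \<alpha> + 1"
      moreover have "take (N - 1) w = butlast w" using len by (simp add: butlast_conv_take)
      moreover have "last w # rev (butlast w) = rev w"
        using \<open>w \<noteq> []\<close> by (metis append_butlast_last_id rev.simps(2) rev_rev_ident)
      ultimately show ?thesis using staircase[of "last w" "rev (butlast w)" "rev w"] len av avoids_rev by simp
    next
      assume "card (set (drop 1 w)) \<noteq> \<alpha> + 1"
      then show ?thesis using staircase[of "hd w" "tl w" w] \<open>w \<noteq> []\<close> len av by (simp add: drop_Suc)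
    qed
  qed
  then show ?thesis unfolding power_staircase_def N_def by blast
qed
end
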